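(* Suppose one of the following holds: (i) $\mathcal{X}$ is compact and the state-space system defined by $f$ has the echo state property; or (ii) $f$ is a contraction in the first entry with a rate $c\in(0,|\mathbf{w}|^{-1})$, that is, $d_{\mathcal{X}}(f(x_1,u),f(x_2,u))\le c\,d_{\mathcal{X}}(x_1,x_2)$ for all $x_1,x_2\in\mathcal{X}$ and $u\in\mathcal{U}$. Then the associated filter $U_f$ exists as a map $U_f:\underline{\mathcal{U}}\to\underline{\mathcal{X}}$ and is continuous.
   Context: $\mathbb{Z}_-=\{\dots,-2,-1\}$; $\mathbb{N}=\{1,2,\dots\}$. $\mathcal{Z},\mathcal{U}$ Polish; $(\mathcal{X},d_{\mathcal{X}})$ Polish with complete metric; $f:\mathcal{X}\times\mathcal{U}\to\mathcal{X}$ continuous. $\underline{\mathcal{Z}}=\mathcal{Z}^{\mathbb{Z}_-}$ (product topology); $V:\underline{\mathcal{Z}}\to\mathcal{U}^{\mathbb{Z}_-}$ continuous and causal; $\underline{\mathcal{U}}=V(\underline{\mathcal{Z}})$ Polish with a metric $d_{\underline{\mathcal{U}}}$ inducing its topology. $\mathbf{w}=(w_t)_{t\le-1}\subseteq(0,1)$ monotone, summing to $1$, $|\mathbf{w}|:=\sup_{n\in\mathbb{N}}(\sup_tw_t/w_{t-n})^{1/n}<\infty$. Fix $x_*\in\mathcal{X}$. $\underline{\mathcal{X}}=\{\mathbf{x}\in\mathcal{X}^{\mathbb{Z}_-}:\sum_tw_td_{\mathcal{X}}(x_t,x_* )<\infty\}$ with metric $d_{\underline{\mathcal{X}}}(\mathbf{x}^1,\mathbf{x}^2)=\sum_tw_td_{\mathcal{X}}(x^1_t,x^2_t)$.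 $F(\mathbf{x},\mathbf{u})_t=f(x_{t-1},u_t)$ for $\mathbf{x}\in\mathcal{X}^{\mathbb{Z}_-},\mathbf{u}\in\mathcal{U}^{\mathbb{Z}_-}$; standing assumption: $F(\underline{\mathcal{X}}\times\underline{\mathcal{U}})\subseteq\underline{\mathcal{X}}$ and $F:\underline{\mathcal{X}}\times\underline{\mathcal{U}}\to\underline{\mathcal{X}}$ is continuous. Echo state property: for every $\mathbf{u}\in\mathcal{U}^{\mathbb{Z}_-}$ there is a unique $\mathbf{x}\in\mathcal{X}^{\mathbb{Z}_-}$ with $\mathbf{x}=F(\mathbf{x},\mathbf{u})$; the associated filter $U_f$ maps $\mathbf{u}$ to this unique solution $\mathbf{x}$ (on whichever set of inputs the solution exists and is unique; in case (ii) the conclusion includes that for each $\mathbf{u}\in\underline{\mathcal{U}}$ there is a unique solution $\mathbf{x}\in\underline{\mathcal{X}}$). *)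

theory Defs
  imports "HOL-Analysis.Analysis"
begin

text \<open>Left-infinite sequences indexed by Z_- = {...,-2,-1} are encoded as
  functions on nat: index n stands for time t = -(n+1). Thus x_{t-1} corresponds to x (Suc n).
  The type nat => 'a carries the product topology (library instance), so
  Z-bar = nat => 'z and U^{Z_-} = nat => 'u carry the product topology.\<close>

definition Polish_top :: "'a topology \<Rightarrow> bool" where
  "Polish_top X \<longleftrightarrow> completely_metrizable_space X \<and> separable_space X"

definition causal :: "((nat \<Rightarrow> 'z) \<Rightarrow> (nat \<Rightarrow> 'u)) \<Rightarrow> bool" where
  "causal V \<longleftrightarrow> (\<forall>z z' n. (\<forall>m\<ge>n. z m = z' m) \<longrightarrow> V z n = V z' n)"

definition wsup :: "(nat \<Rightarrow> real) \<Rightarrow> nat \<Rightarrow> real" where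
  "wsup w n = (SUP k. w k / w (k + n))"

definition wnorm :: "(nat \<Rightarrow> real) \<Rightarrow> real" where
  "wnorm w = (SUP n\<in>{1..}. wsup w n powr (1 / real n))"

definition wnorm_finite :: "(nat \<Rightarrow> real) \<Rightarrow> bool" where
  "wnorm_finite w \<longleftrightarrow> (\<forall>n\<ge>1. bdd_above (range (\<lambda>k. w k / w (k + n))))
      \<and> bdd_above ((\<lambda>n. wsup w n powr (1 / real n)) ` {1..})"

definition weights :: "(nat \<Rightarrow> real) \<Rightarrow> bool" where
  "weights w \<longleftrightarrow> (\<forall>n. 0 < w n \<and> w n < 1) \<and> decseq w \<and> w sums 1 \<and> wnorm_finite w"

definition Xbar :: "(nat \<Rightarrow> real) \<Rightarrow> 'x::metric_space \<Rightarrow> (nat \<Rightarrow> 'x) set" where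
  "Xbar w xs = {x. summable (\<lambda>n. w n * dist (x n) xs)}"

definition dXbar :: "(nat \<Rightarrow> real) \<Rightarrow> (nat \<Rightarrow> 'x::metric_space) \<Rightarrow> (nat \<Rightarrow> 'x) \<Rightarrow> real" where
  "dXbar w x1 x2 = (\<Sum>n. w n * dist (x1 n) (x2 n))"

definition Fsys :: "('x \<Rightarrow> 'u \<Rightarrow> 'x) \<Rightarrow> (nat \<Rightarrow> 'x) \<Rightarrow> (nat \<Rightarrow> 'u) \<Rightarrow> (nat \<Rightarrow> 'x)" where
  "Fsys f x u = (\<lambda>n. f (x (Suc n)) (u n))"

definition ESP :: "('x \<Rightarrow> 'u \<Rightarrow> 'x) \<Rightarrow> bool" where
  "ESP f \<longleftrightarrow> (\<forall>u. \<exists>!x. x = Fsys f x u)"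

end

theory Submission
  imports Defs
begin

text \<open>
  (i) By the echo state property the graph of \<open>U\<^sub>f\<close> is the closed set \<open>{(u, x). F(x, u) = x}\<close>;
  as the product space \<open>\<X>\<^sup>\<nat>\<close> is compact, \<open>U\<^sub>f\<close> is continuous for the product topology.
  Since \<open>\<X>\<close> is bounded, the series defining the weighted metric is dominated by a multiple of
  \<open>w\<close>, so by Tannery's theorem coordinatewise convergence implies convergence in \<open>Xbar\<close>.

  (ii) Since \<open>w\<^sub>t \<le> |w| w\<^sub>t\<^sub>-\<^sub>1\<close>, each map \<open>F(-, u)\<close> is a contraction of the complete
  weighted space \<open>Xbar\<close> with factor at most \<open>c |w| < 1\<close>. Banach's theorem gives the unique
  fixed point \<open>U\<^sub>f(u)\<close>, and \<open>d(U\<^sub>f(u'), U\<^sub>f(u)) \<le> d(F(U\<^sub>f(u), u'), F(U\<^sub>f(u), u)) / (1 - c |w|)\<close>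
  transfers the continuity of \<open>F\<close> in \<open>u\<close> to \<open>U\<^sub>f\<close>.
\<close>

lemma continuous_on_of_closed_graph:
  fixes g :: "'a::topological_space \<Rightarrow> 'b::topological_space"
  assumes compact: "compact (UNIV :: 'b set)" and graph: "closed (range (\<lambda>a. (a, g a)))"
  shows "continuous_on UNIV g"
  unfolding continuous_on_closed_vimage[OF closed_UNIV]
proof (intro allI impI)
  fix B :: "'b set"
  assume "closed B"
  have "closed_map (prod_topology euclidean (euclidean :: 'b topology)) (euclidean :: 'a topology) fst"
    using compact by (intro closed_map_fst) (simp add: compact_space_def)
  then have "closed (fst ` (range (\<lambda>a. (a, g a)) \<inter> UNIV \<times> B))"
    using graph \<open>closed B\<close> by (simp add: closed_map_def closed_Int closed_Times)
  moreover have "g -` B \<inter> UNIV = fst ` (range (\<lambda>a. (a, g a)) \<inter> UNIV \<times> B)"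
    by force
  ultimately show "closed (g -` B \<inter> UNIV)"
    by simp
qed

lemma compact_UNIV_fun:
  assumes "compact (UNIV :: 'a::topological_space set)"
  shows "compact (UNIV :: ('i \<Rightarrow> 'a) set)"
proof -
  have "compact_space (euclidean :: 'a topology)"
    using assms by (simp add: compact_space_def)
  then have "compact_space (product_topology (\<lambda>_. euclidean :: 'a topology) (UNIV :: 'i set))"
    unfolding compact_space_product_topology by blast
  then have "compact_space (euclidean :: ('i \<Rightarrow> 'a) topology)"
    unfolding euclidean_product_topology .
  then show ?thesis
    by (simp add: compact_space_def)
qed

lemma tendsto_zero_inf_principal_iff:
  fixes g :: "'a::topological_space \<Rightarrow> real"
  assumes nonneg: "\<And>v. v \<in> U \<Longrightarrow> 0 \<le> g v"
  shows "(g \<longlongrightarrow> 0) (inf (nhds u) (principal U)) \<longleftrightarrow>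
    (\<forall>e>0. \<exists>N. open N \<and> u \<in> N \<and> (\<forall>v\<in>N \<inter> U. g v < e))"
proof -
  have "(\<forall>v\<in>N. v \<in> U \<longrightarrow> dist (g v) 0 < e) \<longleftrightarrow> (\<forall>v\<in>N \<inter> U. g v < e)" for N e
    using nonneg by auto
  then show ?thesis
    unfolding tendsto_iff eventually_inf_principal eventually_nhds by simp
qed

lemma (in Metric_space) contraction_fixpoint_dist_le:
  assumes "x \<in> M" "y \<in> M" "f y \<in> M" "f x = x" "g y = y" "k < 1"
    and "d (f x) (f y) \<le> k * d x y"
  shows "d x y \<le> d (f y) (g y) / (1 - k)"
proof -
  have "d x y \<le> d (f x) (f y) + d (f y) (g y)"
    using triangle[of "f x" "f y" "g y"] assms by simp
  then have "(1 - k) * d x y \<le> d (f y) (g y)"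
    using assms by (simp add: algebra_simps)
  then show ?thesis
    using \<open>k < 1\<close> by (simp add: field_simps)
qed

lemma weightsD:
  assumes "weights w"
  shows "0 < w n" "summable w"
  using assms unfolding weights_def by (auto simp: sums_iff)

lemma weights_shift_le:
  assumes w: "weights w"
  shows "w n \<le> wsup w 1 * w (Suc n)"
proof -
  have "bdd_above (range (\<lambda>k. w k / w (k + 1)))"
    using w unfolding weights_def wnorm_finite_def by auto
  then have "w n / w (Suc n) \<le> wsup w 1"
    unfolding wsup_def by (auto intro: cSUP_upper)
  then show ?thesis
    using weightsD(1)[OF w, of "Suc n"] by (simp add: divide_le_eq)
qed

lemma shift_factor_pos:
  fixes w :: "nat \<Rightarrow> real"
  assumes "\<And>n. 0 < w n" and "w 0 \<le> K * w (Suc 0)"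
  shows "0 < K"
  using assms by (metis less_le_trans mult_nonpos_nonneg not_less less_imp_le)

lemma wsup_one_pos: "weights w \<Longrightarrow> 0 < wsup w 1"
  by (rule shift_factor_pos[OF weightsD(1) weights_shift_le])

lemma wsup_one_le_wnorm:
  assumes w: "weights w"
  shows "wsup w 1 \<le> wnorm w"
proof -
  have "bdd_above ((\<lambda>n. wsup w n powr (1 / real n)) ` {1..})"
    using w unfolding weights_def wnorm_finite_def by auto
  then have "wsup w 1 powr (1 / real 1) \<le> wnorm w"
    unfolding wnorm_def by (rule cSUP_upper[rotated]) simp
  then show ?thesis
    using wsup_one_pos[OF w] by simp
qed

lemma contraction_factor_lt_1:
  assumes w: "weights w" and c: "0 < c" "c < 1 / wnorm w"
  shows "c * wsup w 1 < 1"
proof -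
  have "0 < wnorm w"
    using wsup_one_pos[OF w] wsup_one_le_wnorm[OF w] by linarith
  then have "c * wnorm w < 1"
    using c by (simp add: pos_less_divide_eq)
  moreover have "c * wsup w 1 \<le> c * wnorm w"
    using c wsup_one_le_wnorm[OF w] by simp
  ultimately show ?thesis
    by linarith
qed

lemma const_in_Xbar: "(\<lambda>_. xs) \<in> Xbar w xs"
  by (simp add: Xbar_def)

lemma dXbar_self [simp]: "dXbar w x x = 0"
  by (simp add: dXbar_def)

lemma summable_weighted_dist:
  assumes w_pos: "\<And>n. 0 < w n" and x: "x \<in> Xbar w xs" and y: "y \<in> Xbar w xs"
  shows "summable (\<lambda>n. w n * dist (x n) (y n))"
proof (rule summable_comparison_test')
  show "summable (\<lambda>n. w n * dist (x n) xs + w n * dist (y n) xs)"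
    using x y by (intro summable_add) (auto simp: Xbar_def)
  show "norm (w n * dist (x n) (y n)) \<le> w n * dist (x n) xs + w n * dist (y n) xs" for n
    using w_pos[of n] mult_left_mono[OF dist_triangle2[of "x n" "y n" xs], of "w n"]
    by (simp add: distrib_left)
qed

lemma sum_weighted_dist_le_dXbar:
  assumes w_pos: "\<And>n. 0 < w n" and x: "x \<in> Xbar w xs" and y: "y \<in> Xbar w xs"
  shows "(\<Sum>n\<in>A. w n * dist (x n) (y n)) \<le> dXbar w x y"
proof -
  have "0 \<le> w n * dist (x n) (y n)" for n
    using w_pos[of n] by simp
  then show ?thesis
    unfolding dXbar_def using summable_weighted_dist[OF w_pos x y]
    by (cases "finite A") (auto intro: sum_le_suminf suminf_nonneg)
qed

lemma weighted_dist_le_dXbar: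
  assumes "\<And>n. 0 < w n" "x \<in> Xbar w xs" "y \<in> Xbar w xs"
  shows "w n * dist (x n) (y n) \<le> dXbar w x y"
  using sum_weighted_dist_le_dXbar[OF assms, of "{n}"] by simp

lemma dXbar_nonneg:
  assumes "\<And>n. 0 < w n" "x \<in> Xbar w xs" "y \<in> Xbar w xs"
  shows "0 \<le> dXbar w x y"
  using sum_weighted_dist_le_dXbar[OF assms, of "{}"] by simp

lemma in_Xbar_of_summable_dist:
  assumes w_pos: "\<And>n. 0 < w n" and x: "x \<in> Xbar w xs"
    and summable: "summable (\<lambda>n. w n * dist (x n) (y n))"
  shows "y \<in> Xbar w xs"
proof -
  have "summable (\<lambda>n. w n * dist (y n) xs)"
  proof (rule summable_comparison_test')
    show "summable (\<lambda>n. w n * dist (x n) (y n) + w n * dist (x n) xs)"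
      using summable x by (intro summable_add) (auto simp: Xbar_def)
    show "norm (w n * dist (y n) xs) \<le> w n * dist (x n) (y n) + w n * dist (x n) xs" for n
      using w_pos[of n] mult_left_mono[OF dist_triangle2[of "y n" xs "x n"], of "w n"]
      by (simp add: distrib_left dist_commute)
  qed
  then show ?thesis
    by (simp add: Xbar_def)
qed

lemma in_Xbar_of_bounded:
  fixes x :: "nat \<Rightarrow> 'x::metric_space"
  assumes w: "\<And>n. 0 \<le> w n" "summable w" and bounded: "\<And>a b :: 'x. dist a b \<le> D"
  shows "x \<in> Xbar w xs"
  unfolding Xbar_def
proof (rule CollectI, rule summable_comparison_test')
  show "summable (\<lambda>n. D * w n)"
    using w(2) by (rule summable_mult)
  show "norm (w n * dist (x n) xs) \<le> D * w n" for n
    using mult_left_mono[OF bounded[of "x n" xs] w(1)] w(1) by (simp add: mult.commute)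
qed

lemma tendsto_dXbar_of_coordinatewise:
  fixes X :: "'p \<Rightarrow> nat \<Rightarrow> 'x::metric_space"
  assumes w: "\<And>n. 0 \<le> w n" "summable w" and bounded: "\<And>a b :: 'x. dist a b \<le> D"
    and coords: "\<And>n. ((\<lambda>p. X p n) \<longlongrightarrow> y n) F"
  shows "((\<lambda>p. dXbar w (X p) y) \<longlongrightarrow> 0) F"
proof (cases "F = bot")
  case False
  have "((\<lambda>p. \<Sum>n. w n * dist (X p n) (y n)) \<longlongrightarrow> (\<Sum>n. 0)) F"
  proof (rule tannerys_theorem[where M = "\<lambda>n. D * w n", THEN conjunct2, THEN conjunct2])
    show "((\<lambda>p. w n * dist (X p n) (y n)) \<longlongrightarrow> 0) F" for n
      using tendsto_dist_iff[THEN iffD1, OF coords[of n]] by (rule tendsto_mult_right_zero)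
    have "norm (w n * dist (X p n) (y n)) \<le> D * w n" for n p
      using mult_left_mono[OF bounded w(1)] w(1) by (simp add: mult.commute)
    then show "\<forall>\<^sub>F (n, p) in at_top \<times>\<^sub>F F. norm (w n * dist (X p n) (y n)) \<le> D * w n"
      by (simp add: always_eventually)
    show "summable (\<lambda>n. D * w n)"
      using w(2) by (rule summable_mult)
  qed fact
  then show ?thesis
    by (simp add: dXbar_def)
qed simp

lemma Cauchy_coordinate_of_Cauchy_dXbar:
  assumes w_pos: "\<And>n. 0 < w n" and \<sigma>_in: "\<And>k. \<sigma> k \<in> Xbar w xs"
    and Cauchy: "\<And>\<epsilon>. \<epsilon> > 0 \<Longrightarrow> \<exists>N. \<forall>k\<ge>N. \<forall>l\<ge>N. dXbar w (\<sigma> k) (\<sigma> l) < \<epsilon>"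
  shows "Cauchy (\<lambda>k. \<sigma> k n)"
proof (rule metric_CauchyI)
  fix \<epsilon> :: real
  assume "\<epsilon> > 0"
  then obtain N where N: "\<forall>k\<ge>N. \<forall>l\<ge>N. dXbar w (\<sigma> k) (\<sigma> l) < w n * \<epsilon>"
    using Cauchy[of "w n * \<epsilon>"] w_pos[of n] by auto
  have "w n * dist (\<sigma> k n) (\<sigma> l n) < w n * \<epsilon>" if "N \<le> k" "N \<le> l" for k l
    using weighted_dist_le_dXbar[OF w_pos \<sigma>_in \<sigma>_in, of n k l] N[rule_format, OF that]
    by (rule le_less_trans)
  then have "dist (\<sigma> k n) (\<sigma> l n) < \<epsilon>" if "N \<le> k" "N \<le> l" for k l
    using that w_pos[of n] by (simp add: mult_less_cancel_left_pos)
  then show "\<exists>N. \<forall>k\<ge>N. \<forall>l\<ge>N. dist (\<sigma> k n) (\<sigma> l n) < \<epsilon>"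
    by blast
qed

lemma dXbar_le_of_coordinatewise_limit:
  assumes w_pos: "\<And>n. 0 < w n" and x: "x \<in> Xbar w xs" and \<sigma>_in: "\<And>l. \<sigma> l \<in> Xbar w xs"
    and lim: "\<And>n. (\<lambda>l. \<sigma> l n) \<longlonglongrightarrow> y n"
    and bound: "\<And>l. N \<le> l \<Longrightarrow> dXbar w x (\<sigma> l) \<le> \<epsilon>"
  shows "summable (\<lambda>n. w n * dist (x n) (y n))" and "dXbar w x y \<le> \<epsilon>"
proof -
  have partial: "(\<Sum>n<m. w n * dist (x n) (y n)) \<le> \<epsilon>" for m
  proof (rule LIMSEQ_le_const2)
    show "(\<lambda>l. \<Sum>n<m. w n * dist (x n) (\<sigma> l n)) \<longlonglongrightarrow> (\<Sum>n<m. w n * dist (x n) (y n))"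
      by (intro tendsto_intros lim)
    show "\<exists>N. \<forall>l\<ge>N. (\<Sum>n<m. w n * dist (x n) (\<sigma> l n)) \<le> \<epsilon>"
      using sum_weighted_dist_le_dXbar[OF w_pos x \<sigma>_in] bound order_trans by blast
  qed
  show summable: "summable (\<lambda>n. w n * dist (x n) (y n))"
    using partial[of "Suc _"] w_pos
    by (intro bounded_imp_summable) (auto simp: lessThan_Suc_atMost less_imp_le)
  show "dXbar w x y \<le> \<epsilon>"
    unfolding dXbar_def using summable partial by (rule suminf_le_const)
qed

text \<open>The absolute value only matters off \<open>Xbar w xs\<close>, where \<open>dXbar\<close> is the sum of a
  divergent series and hence an unspecified value.\<close>

definition Xbar_dist :: "(nat \<Rightarrow> real) \<Rightarrow> (nat \<Rightarrow> 'x::metric_space) \<Rightarrow> (nat \<Rightarrow> 'x) \<Rightarrow> real"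
  where "Xbar_dist w x y = \<bar>dXbar w x y\<bar>"

lemma Xbar_dist_eq_dXbar:
  assumes "\<And>n. 0 < w n" "x \<in> Xbar w xs" "y \<in> Xbar w xs"
  shows "Xbar_dist w x y = dXbar w x y"
  using dXbar_nonneg[OF assms] by (simp add: Xbar_dist_def)

lemma Metric_space_Xbar:
  assumes w_pos: "\<And>n. 0 < w n"
  shows "Metric_space (Xbar w xs) (Xbar_dist w)"
proof
  fix x y z
  assume x: "x \<in> Xbar w xs" and y: "y \<in> Xbar w xs" and z: "z \<in> Xbar w xs"
  note d_eq = Xbar_dist_eq_dXbar[of w, OF w_pos]
  show "Xbar_dist w x y = 0 \<longleftrightarrow> x = y"
  proof
    assume "Xbar_dist w x y = 0"
    then have le0: "w n * dist (x n) (y n) \<le> 0" for n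
      using weighted_dist_le_dXbar[OF w_pos x y, of n] d_eq[OF x y] by simp
    have "x n = y n" for n
      using le0[of n] w_pos[of n] by (simp add: mult_le_0_iff)
    then show "x = y" ..
  qed (simp add: Xbar_dist_def)
  have "w n * dist (x n) (z n) \<le> w n * dist (x n) (y n) + w n * dist (y n) (z n)" for n
    using w_pos[of n] mult_left_mono[OF dist_triangle[of "x n" "z n" "y n"], of "w n"]
    by (simp add: distrib_left)
  moreover have "(\<lambda>n. w n * dist (x n) (z n)) sums dXbar w x z"
    and "(\<lambda>n. w n * dist (x n) (y n) + w n * dist (y n) (z n)) sums (dXbar w x y + dXbar w y z)"
    unfolding dXbar_def using summable_weighted_dist[of w, OF w_pos] x y z
    by (auto intro!: sums_add)
  ultimately have "dXbar w x z \<le> dXbar w x y + dXbar w y z"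
    by (rule sums_le)
  then show "Xbar_dist w x z \<le> Xbar_dist w x y + Xbar_dist w y z"
    using d_eq[OF x z] d_eq[OF x y] d_eq[OF y z] by simp
qed (auto simp: Xbar_dist_def dXbar_def dist_commute)

lemma mcomplete_Xbar:
  fixes xs :: "'x::complete_space"
  assumes w_pos: "\<And>n. 0 < w n"
  shows "Metric_space.mcomplete (Xbar w xs) (Xbar_dist w)"
proof -
  interpret Xbar: Metric_space "Xbar w xs" "Xbar_dist w"
    by (rule Metric_space_Xbar[OF w_pos])
  show ?thesis
    unfolding Xbar.mcomplete_def
  proof (intro allI impI)
    fix \<sigma>
    assume Cauchy: "Xbar.MCauchy \<sigma>"
    then have \<sigma>_in: "\<sigma> k \<in> Xbar w xs" for k
      unfolding Xbar.MCauchy_def by auto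
    have Cauchy_dXbar: "\<exists>N. \<forall>k\<ge>N. \<forall>l\<ge>N. dXbar w (\<sigma> k) (\<sigma> l) < \<epsilon>" if "\<epsilon> > 0" for \<epsilon>
      using Cauchy that Xbar_dist_eq_dXbar[of w, OF w_pos \<sigma>_in \<sigma>_in]
      unfolding Xbar.MCauchy_def by metis
    define y where "y n = lim (\<lambda>k. \<sigma> k n)" for n
    have lim: "(\<lambda>k. \<sigma> k n) \<longlonglongrightarrow> y n" for n
      using Cauchy_coordinate_of_Cauchy_dXbar[OF w_pos \<sigma>_in Cauchy_dXbar, of n]
      unfolding y_def by (simp add: Cauchy_convergent_iff convergent_LIMSEQ_iff)
    have close: "\<exists>N. \<forall>k\<ge>N. summable (\<lambda>n. w n * dist (\<sigma> k n) (y n)) \<and> dXbar w (\<sigma> k) y < \<epsilon>"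
      if "\<epsilon> > 0" for \<epsilon>
    proof -
      obtain N where N: "\<forall>k\<ge>N. \<forall>l\<ge>N. dXbar w (\<sigma> k) (\<sigma> l) < \<epsilon> / 2"
        using Cauchy_dXbar[of "\<epsilon> / 2"] \<open>\<epsilon> > 0\<close> by auto
      have "summable (\<lambda>n. w n * dist (\<sigma> k n) (y n)) \<and> dXbar w (\<sigma> k) y < \<epsilon>" if "N \<le> k" for k
      proof -
        have bound: "dXbar w (\<sigma> k) (\<sigma> l) \<le> \<epsilon> / 2" if "N \<le> l" for l
          using N \<open>N \<le> k\<close> that by (simp add: less_imp_le)
        show ?thesis
          using dXbar_le_of_coordinatewise_limit[where N = N, OF w_pos \<sigma>_in \<sigma>_in lim bound]
            \<open>\<epsilon> > 0\<close> by simp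
      qed
      then show ?thesis
        by blast
    qed
    then obtain N where "summable (\<lambda>n. w n * dist (\<sigma> N n) (y n))"
      using zero_less_one by blast
    then have "y \<in> Xbar w xs"
      by (rule in_Xbar_of_summable_dist[OF w_pos \<sigma>_in])
    moreover have "\<exists>N. \<forall>k\<ge>N. \<sigma> k \<in> Xbar w xs \<and> Xbar_dist w (\<sigma> k) y < \<epsilon>" if "\<epsilon> > 0" for \<epsilon>
      using close[OF that] \<sigma>_in Xbar_dist_eq_dXbar[of w, OF w_pos \<sigma>_in \<open>y \<in> Xbar w xs\<close>]
      by auto
    ultimately show "\<exists>y. limitin Xbar.mtopology \<sigma> y sequentially"
      by (auto simp: Xbar.limit_metric_sequentially)
  qed
qed

lemma Xbar_contraction_unique_fixpoint:
  fixes G :: "(nat \<Rightarrow> 'x::complete_space) \<Rightarrow> nat \<Rightarrow> 'x"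
  assumes w_pos: "\<And>n. 0 < w n" and maps: "\<And>x. x \<in> Xbar w xs \<Longrightarrow> G x \<in> Xbar w xs"
    and contr: "\<And>x y. x \<in> Xbar w xs \<Longrightarrow> y \<in> Xbar w xs \<Longrightarrow>
      dXbar w (G x) (G y) \<le> q * dXbar w x y"
    and "q < 1"
  shows "\<exists>!x. x \<in> Xbar w xs \<and> G x = x"
proof -
  interpret Xbar: Metric_space "Xbar w xs" "Xbar_dist w"
    by (rule Metric_space_Xbar[OF w_pos])
  have Xbar_contr: "Xbar_dist w (G x) (G y) \<le> q * Xbar_dist w x y"
    if "x \<in> Xbar w xs" "y \<in> Xbar w xs" for x y
    using contr[OF that] Xbar_dist_eq_dXbar[of w, OF w_pos that]
      Xbar_dist_eq_dXbar[of w, OF w_pos maps[OF that(1)] maps[OF that(2)]] by simp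
  obtain x where "x \<in> Xbar w xs" "G x = x"
  proof (rule Xbar.Banach_fixedpoint_thm[of G q])
    show "Xbar.mcomplete"
      by (rule mcomplete_Xbar[of w, OF w_pos])
    show "Xbar w xs \<noteq> {}"
      using const_in_Xbar by blast
  qed (use maps Xbar_contr \<open>q < 1\<close> that in auto)
  then show ?thesis
    using Xbar.contraction_imp_unique_fixpoint[of G, OF _ _ _ \<open>q < 1\<close> Xbar_contr] maps by blast
qed

lemma Xbar_fixpoint_dist_le:
  assumes w_pos: "\<And>n. 0 < w n" and x: "x \<in> Xbar w xs" and y: "y \<in> Xbar w xs"
    and Gy: "G y \<in> Xbar w xs" and "G x = x" "H y = y" "q < 1"
    and contr: "dXbar w (G x) (G y) \<le> q * dXbar w x y"
  shows "dXbar w x y \<le> dXbar w (G y) y / (1 - q)"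
proof -
  interpret Xbar: Metric_space "Xbar w xs" "Xbar_dist w"
    by (rule Metric_space_Xbar[OF w_pos])
  note d_eq = Xbar_dist_eq_dXbar[of w, OF w_pos]
  have "Xbar_dist w (G x) (G y) \<le> q * Xbar_dist w x y"
    using contr \<open>G x = x\<close> d_eq[OF x Gy] d_eq[OF x y] by simp
  then have "Xbar_dist w x y \<le> Xbar_dist w (G y) (H y) / (1 - q)"
    by (intro Xbar.contraction_fixpoint_dist_le) (use assms in auto)
  then show ?thesis
    using \<open>H y = y\<close> d_eq[OF x y] d_eq[OF Gy y] by simp
qed

lemma continuous_on_Fsys:
  fixes f :: "'x::topological_space \<Rightarrow> 'u::topological_space \<Rightarrow> 'x"
  assumes f_cont: "continuous_on UNIV (\<lambda>p. f (fst p) (snd p))"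
  shows "continuous_on UNIV (\<lambda>p. Fsys f (snd p) (fst p))"
  unfolding Fsys_def
proof (intro continuous_on_coordinatewise_then_product)
  fix n
  have "continuous_on UNIV (\<lambda>p :: (nat \<Rightarrow> 'u) \<times> (nat \<Rightarrow> 'x). snd p (Suc n))"
    by (rule continuous_on_compose2[OF continuous_on_product_coordinates
          continuous_on_snd[OF continuous_on_id] subset_UNIV])
  moreover have "continuous_on UNIV (\<lambda>p :: (nat \<Rightarrow> 'u) \<times> (nat \<Rightarrow> 'x). fst p n)"
    by (rule continuous_on_compose2[OF continuous_on_product_coordinates
          continuous_on_fst[OF continuous_on_id] subset_UNIV])
  ultimately have "continuous_on UNIV (\<lambda>p :: (nat \<Rightarrow> 'u) \<times> (nat \<Rightarrow> 'x). (snd p (Suc n), fst p n))"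
    by (rule continuous_on_Pair)
  from continuous_on_compose2[OF f_cont this subset_UNIV]
  show "continuous_on UNIV (\<lambda>p. f (snd p (Suc n)) (fst p n))"
    by simp
qed

lemma dXbar_Fsys_le:
  assumes w_pos: "\<And>n. 0 < w n" and shift: "\<And>n. w n \<le> K * w (Suc n)"
    and lip: "\<And>x1 x2 u. dist (f x1 u) (f x2 u) \<le> c * dist x1 x2" and "0 \<le> c"
    and x: "x \<in> Xbar w xs" and y: "y \<in> Xbar w xs"
  shows "dXbar w (Fsys f x u) (Fsys f y u) \<le> c * K * dXbar w x y"
proof -
  let ?a = "\<lambda>n. w n * dist (x n) (y n)"
  have "0 < K"
    using shift_factor_pos[of w, OF w_pos shift] .
  have summable_a: "summable ?a"
    using summable_weighted_dist[OF w_pos x y] .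
  have term_le: "w n * dist (Fsys f x u n) (Fsys f y u n) \<le> c * K * ?a (Suc n)" for n
  proof -
    have "w n * dist (Fsys f x u n) (Fsys f y u n) \<le> w n * (c * dist (x (Suc n)) (y (Suc n)))"
      unfolding Fsys_def using lip w_pos[of n] by (intro mult_left_mono) auto
    also have "\<dots> \<le> K * w (Suc n) * (c * dist (x (Suc n)) (y (Suc n)))"
      using shift[of n] \<open>0 \<le> c\<close> by (intro mult_right_mono) auto
    finally show ?thesis
      by (simp add: algebra_simps)
  qed
  have summable_a_Suc: "summable (\<lambda>n. ?a (Suc n))"
    using summable_a by (rule summable_Suc_iff[THEN iffD2])
  then have summable_shift: "summable (\<lambda>n. c * K * ?a (Suc n))"
    by (rule summable_mult)
  have summable_F: "summable (\<lambda>n. w n * dist (Fsys f x u n) (Fsys f y u n))"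
    using term_le by (intro summable_comparison_test'[OF summable_shift])
      (simp add: abs_mult abs_of_pos[OF w_pos])
  have "dXbar w (Fsys f x u) (Fsys f y u) \<le> (\<Sum>n. c * K * ?a (Suc n))"
    unfolding dXbar_def by (rule suminf_le[OF term_le summable_F summable_shift])
  also have "\<dots> = c * K * (dXbar w x y - ?a 0)"
    unfolding dXbar_def using suminf_split_head[OF summable_a] summable_a_Suc
    by (simp add: suminf_mult)
  also have "\<dots> \<le> c * K * dXbar w x y"
    using w_pos[of 0] \<open>0 \<le> c\<close> \<open>0 < K\<close> by (intro mult_left_mono) auto
  finally show ?thesis .
qed

lemma echo_state_filter_compact:
  fixes f :: "'x::metric_space \<Rightarrow> 'u::topological_space \<Rightarrow> 'x"
  assumes w: "weights w" and f_cont: "continuous_on UNIV (\<lambda>p. f (fst p) (snd p))"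
    and compact: "compact (UNIV :: 'x set)" and esp: "ESP f"
  obtains Uf where "\<And>u. Uf u \<in> Xbar w xs" "\<And>u. Fsys f (Uf u) u = Uf u"
    and "\<And>u x. Fsys f x u = x \<Longrightarrow> x = Uf u"
    and "\<And>u. ((\<lambda>u'. dXbar w (Uf u') (Uf u)) \<longlongrightarrow> 0) (nhds u)"
proof -
  define Uf where "Uf u = (THE x. x = Fsys f x u)" for u
  have ex1: "\<exists>!x. x = Fsys f x u" for u
    using esp unfolding ESP_def by blast
  have fixpoint: "Fsys f (Uf u) u = Uf u" for u
    unfolding Uf_def by (rule theI'[OF ex1, symmetric])
  have unique: "x = Uf u" if "Fsys f x u = x" for x u
    unfolding Uf_def by (rule the1_equality[OF ex1, symmetric]) (rule that[symmetric])
  obtain D where D: "\<And>a b :: 'x. dist a b \<le> D"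
    using compact_imp_bounded[OF compact] unfolding bounded_two_points by blast
  have w_nonneg: "0 \<le> w n" for n
    using weightsD(1)[OF w] by (rule less_imp_le)
  have "range (\<lambda>u. (u, Uf u)) = {p. Fsys f (snd p) (fst p) = snd p}"
    by (auto simp: fixpoint image_iff prod_eq_iff dest: unique)
  moreover have "closed {p. Fsys f (snd p) (fst p) = snd p}"
    by (rule closed_Collect_eq[OF continuous_on_Fsys[OF f_cont]
          continuous_on_snd[OF continuous_on_id]])
  ultimately have "continuous_on UNIV Uf"
    by (intro continuous_on_of_closed_graph compact_UNIV_fun compact) simp
  then have "continuous_on UNIV (\<lambda>u. Uf u n)" for n
    by (rule continuous_on_product_then_coordinatewise)
  then have "((\<lambda>u'. Uf u' n) \<longlongrightarrow> Uf u n) (at u)" for u n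
    by (simp add: continuous_on_def)
  then have "((\<lambda>u'. Uf u' n) \<longlongrightarrow> Uf u n) (nhds u)" for u n
    by (intro tendsto_at_iff_tendsto_nhds[THEN iffD1])
  then have Uf_cont: "((\<lambda>u'. dXbar w (Uf u') (Uf u)) \<longlongrightarrow> 0) (nhds u)" for u
    by (rule tendsto_dXbar_of_coordinatewise[OF w_nonneg weightsD(2)[OF w] D])
  show thesis
  proof (rule that)
    show "Uf u \<in> Xbar w xs" for u
      by (rule in_Xbar_of_bounded[of w, OF w_nonneg weightsD(2)[OF w] D])
  qed (fact fixpoint unique Uf_cont)+
qed

lemma echo_state_filter_contraction:
  fixes f :: "'x::complete_space \<Rightarrow> 'u::topological_space \<Rightarrow> 'x"
  assumes w: "weights w"
    and lip: "\<And>x1 x2 u. dist (f x1 u) (f x2 u) \<le> c * dist x1 x2"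
    and c: "0 < c" "c < 1 / wnorm w"
    and maps: "\<And>x u. x \<in> Xbar w xs \<Longrightarrow> u \<in> U \<Longrightarrow> Fsys f x u \<in> Xbar w xs"
    and cont: "\<And>x u. x \<in> Xbar w xs \<Longrightarrow> u \<in> U \<Longrightarrow>
      ((\<lambda>u'. dXbar w (Fsys f x u') (Fsys f x u)) \<longlongrightarrow> 0) (inf (nhds u) (principal U))"
  obtains Uf where "\<And>u. u \<in> U \<Longrightarrow> Uf u \<in> Xbar w xs"
    and "\<And>u. u \<in> U \<Longrightarrow> Fsys f (Uf u) u = Uf u"
    and "\<And>u x. u \<in> U \<Longrightarrow> x \<in> Xbar w xs \<Longrightarrow> Fsys f x u = x \<Longrightarrow> x = Uf u"
    and "\<And>u. u \<in> U \<Longrightarrow> ((\<lambda>u'. dXbar w (Uf u') (Uf u)) \<longlongrightarrow> 0) (inf (nhds u) (principal U))"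
proof -
  note w_pos = weightsD(1)[OF w]
  define q where "q = c * wsup w 1"
  have "q < 1"
    unfolding q_def by (rule contraction_factor_lt_1[OF w c])
  have contr: "dXbar w (Fsys f x u) (Fsys f y u) \<le> q * dXbar w x y"
    if "x \<in> Xbar w xs" "y \<in> Xbar w xs" for x y u
    unfolding q_def using c
    by (intro dXbar_Fsys_le[of w "wsup w 1" f c, OF w_pos weights_shift_le[OF w] lip _ that]) simp
  have fixpoint_unique: "\<exists>!x. x \<in> Xbar w xs \<and> Fsys f x u = x" if "u \<in> U" for u
    by (rule Xbar_contraction_unique_fixpoint[of w, OF w_pos maps[OF _ that] contr \<open>q < 1\<close>])
  define Uf where "Uf u = (THE x. x \<in> Xbar w xs \<and> Fsys f x u = x)" for u
  have Uf: "Uf u \<in> Xbar w xs" "Fsys f (Uf u) u = Uf u" if "u \<in> U" for u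
    using theI'[OF fixpoint_unique[OF that]] unfolding Uf_def by auto
  have Uf_unique: "x = Uf u" if "u \<in> U" "x \<in> Xbar w xs" "Fsys f x u = x" for u x
    unfolding Uf_def
    by (rule the1_equality[OF fixpoint_unique[OF that(1)], symmetric]) (use that in simp)
  have Uf_cont: "((\<lambda>u'. dXbar w (Uf u') (Uf u)) \<longlongrightarrow> 0) (inf (nhds u) (principal U))"
    if u: "u \<in> U" for u
  proof (rule tendsto_sandwich)
    have "dXbar w (Uf u') (Uf u) \<le> dXbar w (Fsys f (Uf u) u') (Uf u) / (1 - q)"
      if u': "u' \<in> U" for u'
      by (rule Xbar_fixpoint_dist_le[where G = "\<lambda>x. Fsys f x u'" and H = "\<lambda>x. Fsys f x u",
            OF w_pos Uf(1)[OF u'] Uf(1)[OF u] maps[OF Uf(1)[OF u] u'] Uf(2)[OF u'] Uf(2)[OF u]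
            \<open>q < 1\<close> contr[of "Uf u'" "Uf u" u', OF Uf(1)[OF u'] Uf(1)[OF u]]])
    then show "\<forall>\<^sub>F u' in inf (nhds u) (principal U).
        dXbar w (Uf u') (Uf u) \<le> dXbar w (Fsys f (Uf u) u') (Fsys f (Uf u) u) / (1 - q)"
      using Uf(2)[OF u] by (auto simp: eventually_inf_principal intro!: always_eventually)
    show "\<forall>\<^sub>F u' in inf (nhds u) (principal U). 0 \<le> dXbar w (Uf u') (Uf u)"
      using dXbar_nonneg[of w, OF w_pos Uf(1) Uf(1)[OF u]]
      by (auto simp: eventually_inf_principal intro!: always_eventually)
    show "((\<lambda>u'. dXbar w (Fsys f (Uf u) u') (Fsys f (Uf u) u) / (1 - q)) \<longlongrightarrow> 0)
        (inf (nhds u) (principal U))"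
      using tendsto_divide_zero[OF cont[OF Uf(1)[OF u] u]] .
  qed simp
  show thesis
    by (rule that[of Uf, OF Uf Uf_unique Uf_cont])
qed

lemma echo_state_filter_continuous:
  fixes f :: "'x::complete_space \<Rightarrow> 'u::topological_space \<Rightarrow> 'x"
  assumes w: "weights w" and f_cont: "continuous_on UNIV (\<lambda>p. f (fst p) (snd p))"
    and maps: "\<And>x u. x \<in> Xbar w xs \<Longrightarrow> u \<in> U \<Longrightarrow> Fsys f x u \<in> Xbar w xs"
    and cont: "\<And>x u. x \<in> Xbar w xs \<Longrightarrow> u \<in> U \<Longrightarrow>
      ((\<lambda>u'. dXbar w (Fsys f x u') (Fsys f x u)) \<longlongrightarrow> 0) (inf (nhds u) (principal U))"
    and cases: "(compact (UNIV :: 'x set) \<and> ESP f) \<or>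
      (\<exists>c. 0 < c \<and> c < 1 / wnorm w \<and> (\<forall>x1 x2 u. dist (f x1 u) (f x2 u) \<le> c * dist x1 x2))"
  obtains Uf where "\<And>u. u \<in> U \<Longrightarrow> Uf u \<in> Xbar w xs"
    and "\<And>u. u \<in> U \<Longrightarrow> Fsys f (Uf u) u = Uf u"
    and "\<And>u x. u \<in> U \<Longrightarrow> x \<in> Xbar w xs \<Longrightarrow> Fsys f x u = x \<Longrightarrow> x = Uf u"
    and "\<And>u. u \<in> U \<Longrightarrow> ((\<lambda>u'. dXbar w (Uf u') (Uf u)) \<longlongrightarrow> 0) (inf (nhds u) (principal U))"
  using cases
proof
  assume "compact (UNIV :: 'x set) \<and> ESP f"
  then obtain Uf where "\<And>u. Uf u \<in> Xbar w xs" "\<And>u. Fsys f (Uf u) u = Uf u"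
    and "\<And>u x. Fsys f x u = x \<Longrightarrow> x = Uf u"
    and lim: "\<And>u. ((\<lambda>u'. dXbar w (Uf u') (Uf u)) \<longlongrightarrow> 0) (nhds u)"
    using echo_state_filter_compact[OF w f_cont, of xs] by auto
  then show thesis
    by (intro that[of Uf] tendsto_mono[OF inf_le1 lim])
next
  assume "\<exists>c. 0 < c \<and> c < 1 / wnorm w \<and> (\<forall>x1 x2 u. dist (f x1 u) (f x2 u) \<le> c * dist x1 x2)"
  then obtain c where c: "0 < c" "c < 1 / wnorm w"
    and lip: "\<And>x1 x2 u. dist (f x1 u) (f x2 u) \<le> c * dist x1 x2"
    by blast
  show thesis
    by (rule echo_state_filter_contraction[OF w lip c maps cont that])
qed

theorem lemmaB6:
  fixes f :: "'x::polish_space \<Rightarrow> 'u::polish_space \<Rightarrow> 'x"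
    and V :: "(nat \<Rightarrow> 'z::polish_space) \<Rightarrow> (nat \<Rightarrow> 'u)"
    and w :: "nat \<Rightarrow> real"
    and xs :: 'x
  defines "Ubar \<equiv> range V"
  assumes f_cont: "continuous_on UNIV (\<lambda>p. f (fst p) (snd p))"
    and V_cont: "continuous_on UNIV V"
    and V_causal: "causal V"
    and Ubar_Polish: "Polish_top (subtopology euclidean Ubar)"
    and w: "weights w"
    and F_maps: "\<forall>x\<in>Xbar w xs. \<forall>u\<in>Ubar. Fsys f x u \<in> Xbar w xs"
    and F_cont: "\<forall>x\<in>Xbar w xs. \<forall>u\<in>Ubar. \<forall>e>0. \<exists>d>0. \<exists>N. open N \<and> u \<in> N \<and>
        (\<forall>x'\<in>Xbar w xs. \<forall>u'\<in>N \<inter> Ubar. dXbar w x' x < d \<longrightarrow>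
           dXbar w (Fsys f x' u') (Fsys f x u) < e)"
    and cases: "(compact (UNIV :: 'x set) \<and> ESP f) \<or>
      (\<exists>c. 0 < c \<and> c < 1 / wnorm w \<and>
         (\<forall>x1 x2 u. dist (f x1 u) (f x2 u) \<le> c * dist x1 x2))"
  shows "\<exists>Uf. (\<forall>u\<in>Ubar. Uf u \<in> Xbar w xs \<and> Uf u = Fsys f (Uf u) u \<and>
                 (\<forall>x\<in>Xbar w xs. x = Fsys f x u \<longrightarrow> x = Uf u))
           \<and> (\<forall>u\<in>Ubar. \<forall>e>0. \<exists>N. open N \<and> u \<in> N \<and>
                 (\<forall>u'\<in>N \<inter> Ubar. dXbar w (Uf u') (Uf u) < e))"
proof -
  note w_pos = weightsD(1)[OF w]
  have maps: "Fsys f x u \<in> Xbar w xs" if "x \<in> Xbar w xs" "u \<in> Ubar" for x u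
    using F_maps that by blast
  have "\<exists>N. open N \<and> u \<in> N \<and> (\<forall>u'\<in>N \<inter> Ubar. dXbar w (Fsys f x u') (Fsys f x u) < e)"
    if "x \<in> Xbar w xs" "u \<in> Ubar" "e > 0" for x u e
    using F_cont[rule_format, OF that] that(1) by fastforce
  then have "((\<lambda>u'. dXbar w (Fsys f x u') (Fsys f x u)) \<longlongrightarrow> 0) (inf (nhds u) (principal Ubar))"
    if "x \<in> Xbar w xs" "u \<in> Ubar" for x u
    using that by (subst tendsto_zero_inf_principal_iff) (auto intro: dXbar_nonneg[of w, OF w_pos] maps)
  then obtain Uf where Uf: "\<And>u. u \<in> Ubar \<Longrightarrow> Uf u \<in> Xbar w xs"
      "\<And>u. u \<in> Ubar \<Longrightarrow> Fsys f (Uf u) u = Uf u"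
    and Uf_unique: "\<And>u x. u \<in> Ubar \<Longrightarrow> x \<in> Xbar w xs \<Longrightarrow> Fsys f x u = x \<Longrightarrow> x = Uf u"
    and Uf_cont: "\<And>u. u \<in> Ubar \<Longrightarrow>
      ((\<lambda>u'. dXbar w (Uf u') (Uf u)) \<longlongrightarrow> 0) (inf (nhds u) (principal Ubar))"
    using echo_state_filter_continuous[OF w f_cont maps _ cases] by blast
  show ?thesis
  proof (intro exI[of _ Uf] conjI ballI allI impI)
    fix u
    assume u: "u \<in> Ubar"
    show "Uf u \<in> Xbar w xs" "Uf u = Fsys f (Uf u) u"
      using Uf[OF u] by simp_all
    show "x = Uf u" if "x \<in> Xbar w xs" "x = Fsys f x u" for x
      using Uf_unique[OF u that(1) that(2)[symmetric]] .
    show "\<exists>N. open N \<and> u \<in> N \<and> (\<forall>u'\<in>N \<inter> Ubar. dXbar w (Uf u') (Uf u) < e)" if "e > 0" for e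
      using Uf_cont[OF u] Uf u that
      by (subst (asm) tendsto_zero_inf_principal_iff) (auto intro: dXbar_nonneg[of w, OF w_pos])
  qed
qed

end
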